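(* Let $n\ge 6$ and $k$ be integers with $3\le k\le n-3$. Then for every integer $m\ge 2$, \[ \mathsf{BO}(k,\mathbb{Z}/n\mathbb{Z})\ge \frac{1}{m}\left(\frac{(n/k)^{1/m}-k}{k-1}\right)^{m-2}. \]
   Context: For a positive integer $k$, a set $\{g_1,\dots,g_k\}$ of $k$ distinct elements of a finite abelian group $G$ (written additively) is called $k$-barycentric if $\sum_{i=1}^k g_i = k\,g_j$ for some $1\le j\le k$. The $k$-th barycentric Olson constant $\mathsf{BO}(k,G)$ is the smallest integer $\ell$ such that every subset $A\subseteq G$ with $|A|\ge \ell$ contains a $k$-barycentric subset (so that always $\mathsf{BO}(k,G)\le |G|+1$). *)

theory Defs
  imports Complex_Main "HOL-Algebra.Elementary_Groups" "HOL-Algebra.FiniteProduct"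
begin

text \<open>Groups are HOL-Algebra structures written multiplicatively; for an abelian
group written additively, the sum of a set is finprod and k g is g [^] k.\<close>

definition barycentric :: "('a, 'b) monoid_scheme \<Rightarrow> nat \<Rightarrow> 'a set \<Rightarrow> bool" where
  "barycentric G k S \<longleftrightarrow> S \<subseteq> carrier G \<and> finite S \<and> card S = k \<and>
     (\<exists>g\<in>S. finprod G (\<lambda>x. x) S = g [^]\<^bsub>G\<^esub> k)"

definition BO :: "nat \<Rightarrow> ('a, 'b) monoid_scheme \<Rightarrow> nat" where
  "BO k G = (LEAST l. \<forall>A. A \<subseteq> carrier G \<and> card A \<ge> l \<longrightarrow>
                         (\<exists>B\<subseteq>A. barycentric G k B))"

end

theory Submission
  imports Defs
begin

(* Fix a base B and a digit bound d with (k-1)(d-1) < B and k B^m <= n.  Encode a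
   vector v in {0..d-1}^m as the integer N v = sum_i v_i B^i.  Restrict to the vectors
   of one fixed squared norm |v|^2 = r; by pigeonhole some r gives at least
   d^m / (m(d-1)^2 + 1) vectors.  Their codes form a barycentric-free subset of Z/nZ:
   a relation sum_{v in F} N v = k N w (mod n) holds in Z because both sides are below
   n, after cancelling w it can be read off digit by digit because no carries occur,
   so w is the average of the other k-1 vectors, which is impossible for distinct
   points on one sphere (the sum of |v - w|^2 would vanish). *)

section \<open>Base-B expansions\<close>

definition digits_value :: "nat \<Rightarrow> nat \<Rightarrow> (nat \<Rightarrow> nat) \<Rightarrow> nat" where
  "digits_value B m v = (\<Sum>i<m. v i * B^i)"

lemma digits_value_less:
  assumes "\<forall>i<m. v i < B"
  shows "digits_value B m v < B^m"
  using assms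
proof (induction m)
  case 0 then show ?case by (simp add: digits_value_def)
next
  case (Suc m)
  have "digits_value B (Suc m) v = digits_value B m v + v m * B^m"
    by (simp add: digits_value_def)
  also have "\<dots> < B^m + v m * B^m" using Suc by simp
  also have "\<dots> = (1 + v m) * B^m" by simp
  also have "\<dots> \<le> B * B^m" using Suc.prems by (intro mult_right_mono) auto
  finally show ?case by simp
qed

lemma digits_value_inject:
  assumes "\<forall>i<m. u i < B" "\<forall>i<m. v i < B" "digits_value B m u = digits_value B m v"
  shows "\<forall>i<m. u i = v i"
  using assms
proof (induction m)
  case 0 then show ?case by simp
next
  case (Suc m)
  let ?su = "digits_value B m u" and ?sv = "digits_value B m v"
  have below: "?su < B^m" "?sv < B^m"
    using Suc.prems(1,2) by (auto intro: digits_value_less)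
  have eq: "?su + u m * B^m = ?sv + v m * B^m"
    using Suc.prems(3) by (simp add: digits_value_def)
  have "B^m > 0" using below(1) by (rule le_less_trans[OF le0])
  then have "(?su + u m * B^m) div B^m = u m" "(?sv + v m * B^m) div B^m = v m"
    using below by simp_all
  then have top: "u m = v m" using eq by metis
  then have "?su = ?sv" using eq by simp
  then have "\<forall>i<m. u i = v i" using Suc by simp
  then show ?case using top by (auto simp: less_Suc_eq)
qed

lemma digits_value_sum:
  "digits_value B m (\<lambda>i. \<Sum>v\<in>F. x v i) = (\<Sum>v\<in>F. digits_value B m (x v))"
  unfolding digits_value_def by (simp add: sum_distrib_right sum.swap[of _ F])

lemma digits_value_scale:
  "digits_value B m (\<lambda>i. c * v i) = c * digits_value B m v"
  unfolding digits_value_def by (simp add: sum_distrib_left mult.assoc)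

section \<open>Averages of points on a sphere\<close>

text \<open>If w is the average of finitely many points which all have the same squared
  norm as w, then all of them coincide with w: the sum of their squared distances
  to w expands to zero.\<close>
lemma average_on_sphere:
  fixes x :: "'b \<Rightarrow> nat \<Rightarrow> 'a::linordered_idom" and w :: "nat \<Rightarrow> 'a"
  assumes "finite F"
    and norm: "\<forall>u\<in>F. (\<Sum>i<m. x u i ^ 2) = (\<Sum>i<m. w i ^ 2)"
    and avg: "\<forall>i<m. (\<Sum>u\<in>F. x u i) = of_nat (card F) * w i"
  shows "\<forall>u\<in>F. \<forall>i<m. x u i = w i"
proof -
  let ?c = "of_nat (card F) :: 'a" and ?r = "\<Sum>i<m. w i ^ 2"
  have squares: "(\<Sum>u\<in>F. \<Sum>i<m. x u i ^ 2) = ?c * ?r"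
    using norm by simp
  have "(\<Sum>u\<in>F. \<Sum>i<m. x u i * w i) = (\<Sum>i<m. (\<Sum>u\<in>F. x u i) * w i)"
    by (simp add: sum_distrib_right sum.swap[of _ F])
  also have "\<dots> = ?c * ?r"
    using avg by (simp add: sum_distrib_left power2_eq_square mult.assoc)
  finally have mixed: "(\<Sum>u\<in>F. \<Sum>i<m. x u i * w i) = ?c * ?r" .
  have "(\<Sum>u\<in>F. \<Sum>i<m. (x u i - w i)^2)
      = (\<Sum>u\<in>F. \<Sum>i<m. x u i ^ 2) - 2 * (\<Sum>u\<in>F. \<Sum>i<m. x u i * w i) + ?c * ?r"
    by (simp add: power2_diff sum.distrib sum_subtractf sum_distrib_left mult.assoc)
  then have "(\<Sum>u\<in>F. \<Sum>i<m. (x u i - w i)^2) = 0"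
    using squares mixed by simp
  then have "\<forall>u\<in>F. \<forall>i\<in>{..<m}. (x u i - w i)^2 = 0"
    using assms(1) by (simp add: sum_nonneg_eq_0_iff sum_nonneg)
  then show ?thesis by simp
qed

section \<open>Barycentric sets and BO\<close>

lemma finprod_integer_mod_group:
  assumes "finite S" "S \<subseteq> carrier (integer_mod_group n)"
  shows "finprod (integer_mod_group n) (\<lambda>x. x) S = (\<Sum>S) mod int n"
  using assms
proof (induction S rule: finite_induct)
  case empty
  show ?case
    using comm_monoid.finprod_empty[OF comm_group.axioms(1)[OF abelian_integer_mod_group]]
    by simp
next
  case (insert x F)
  have "finprod (integer_mod_group n) (\<lambda>x. x) (insert x F)
      = (x + finprod (integer_mod_group n) (\<lambda>x. x) F) mod int n"
    using insert comm_monoid.finprod_insert[OF comm_group.axioms(1)[OF abelian_integer_mod_group],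
        of F x "\<lambda>x. x" n]
    by (auto simp: Pi_def)
  also have "\<dots> = (x + \<Sum>F) mod int n" using insert by (simp add: mod_add_right_eq)
  finally show ?case using insert by simp
qed

lemma card_free_set_less_BO:
  assumes "finite (carrier G)" "A \<subseteq> carrier G" "\<forall>S\<subseteq>A. \<not> barycentric G k S"
  shows "card A < BO k G"
proof -
  let ?P = "\<lambda>l. \<forall>A. A \<subseteq> carrier G \<and> card A \<ge> l \<longrightarrow> (\<exists>B\<subseteq>A. barycentric G k B)"
  have "?P (card (carrier G) + 1)"
  proof (intro allI impI)
    fix A' assume A': "A' \<subseteq> carrier G \<and> card (carrier G) + 1 \<le> card A'"
    then have "card A' \<le> card (carrier G)" using card_mono[OF assms(1)] by simp
    with A' have False by linarith
    then show "\<exists>B\<subseteq>A'. barycentric G k B" ..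
  qed
  then have least: "?P (BO k G)" unfolding BO_def by (rule LeastI)
  show ?thesis
  proof (rule ccontr)
    assume "\<not> card A < BO k G"
    then obtain S where "S \<subseteq> A" "barycentric G k S" using least assms(2) by auto
    then show False using assms(3) by blast
  qed
qed

section \<open>A barycentric-free set in Z/nZ\<close>

lemma PiE_lessThan_eqI:
  assumes "u \<in> PiE {..<m} X" "v \<in> PiE {..<m} X" "\<forall>i<m. u i = v i"
  shows "u = v"
  using assms by (intro PiE_ext[of u "{..<m}" X v]) auto

text \<open>Grid vectors with digits below d are valid base-B digit strings once
  (k-1)(d-1) < B; this slack is what rules out carries when k-1 of them are added.\<close>
lemma grid_digit_less_base:
  fixes v :: "nat \<Rightarrow> nat" and d k B :: nat
  assumes "v \<in> PiE {..<m} (\<lambda>_. {..<d})" "i < m" "k \<ge> 2" "(k-1)*(d-1) < B"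
  shows "v i < B"
proof -
  have "v i < d" using assms(1,2) by (auto simp: PiE_def Pi_def)
  then have "v i \<le> d - 1" by linarith
  also have "\<dots> = 1 * (d-1)" by simp
  also have "\<dots> \<le> (k-1)*(d-1)" using assms(3) by (intro mult_le_mono1) simp
  finally show ?thesis using assms(4) by linarith
qed

lemma large_fibre:
  fixes q :: "'a \<Rightarrow> nat"
  assumes "finite V" "\<forall>v\<in>V. q v \<le> M"
  shows "\<exists>r. card V \<le> card {v\<in>V. q v = r} * (M + 1)"
proof -
  define c where "c r = card {v\<in>V. q v = r}" for r
  have "Max (c ` {..M}) \<in> c ` {..M}" by (intro Max_in) auto
  then obtain r where r: "r \<in> {..M}" "c r = Max (c ` {..M})" by (metis imageE)
  have "card V \<le> card (\<Union>s\<in>{..M}. {v\<in>V. q v = s})"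
    using assms by (intro card_mono) auto
  also have "\<dots> \<le> (\<Sum>s\<in>{..M}. c s)" unfolding c_def by (rule card_UN_le) simp
  also have "\<dots> \<le> (M + 1) * c r"
    using sum_bounded_above[of "{..M}" c "c r"] r by simp
  finally show ?thesis by (auto simp: c_def mult.commute)
qed

lemma barycentric_small_residues:
  fixes N :: "'a \<Rightarrow> nat"
  assumes inj: "inj_on N F" and small: "\<forall>v\<in>F. N v < C" and kC: "k * C \<le> n"
    and SF: "S \<subseteq> (\<lambda>v. int (N v)) ` F" and bary: "barycentric (integer_mod_group n) k S"
  shows "\<exists>G w. G \<subseteq> F \<and> finite G \<and> card G = k \<and> w \<in> G \<and> (\<Sum>v\<in>G. N v) = k * N w"
proof -
  obtain g where S: "S \<subseteq> carrier (integer_mod_group n)" "finite S" "card S = k" "g \<in> S"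
    and gS: "finprod (integer_mod_group n) (\<lambda>x. x) S = g [^]\<^bsub>integer_mod_group n\<^esub> k"
    using bary unfolding barycentric_def by auto
  define G where "G = {v\<in>F. int (N v) \<in> S}"
  have GF: "G \<subseteq> F" and SG: "S = (\<lambda>v. int (N v)) ` G" using SF by (auto simp: G_def)
  have injG: "inj_on (\<lambda>v. int (N v)) G"
    using inj_on_subset[OF inj GF] by (simp add: inj_on_def)
  have finG: "finite G" using S(2) SG injG finite_imageD by blast
  have cardG: "card G = k" using S(3) SG card_image[OF injG] by simp
  obtain w where wG: "w \<in> G" and gw: "g = int (N w)" using S(4) SG by auto
  have "\<Sum>S = int (\<Sum>v\<in>G. N v)"
    using SG sum.reindex[OF injG, of "\<lambda>x. x"] by simp
  then have "int (\<Sum>v\<in>G. N v) mod int n = int (k * N w) mod int n"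
    using gS gw finprod_integer_mod_group[OF S(2,1)] by simp
  then have "int ((\<Sum>v\<in>G. N v) mod n) = int ((k * N w) mod n)"
    by (simp add: of_nat_mod)
  then have "(\<Sum>v\<in>G. N v) mod n = (k * N w) mod n"
    by (simp only: of_nat_eq_iff)
  moreover have "(\<Sum>v\<in>G. N v) < (\<Sum>v\<in>G. C)"
    using finG wG GF small by (intro sum_strict_mono) auto
  then have "(\<Sum>v\<in>G. N v) < n" using cardG kC by simp
  moreover have "k * N w < k * C" using small wG GF cardG finG by (cases "k = 0") auto
  then have "k * N w < n" using kC by linarith
  ultimately have "(\<Sum>v\<in>G. N v) = k * N w" by simp
  then show ?thesis using GF finG cardG wG by blast
qed

text \<open>Reading a relation sum N v = k N w among grid codes digit by digit: because
  (k-1)(d-1) < B no carries occur, so w is the average of the other k-1 vectors.\<close>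
lemma grid_relation_digitwise:
  fixes G :: "(nat \<Rightarrow> nat) set" and w :: "nat \<Rightarrow> nat"
  assumes k2: "k \<ge> 2" and dB: "(k-1)*(d-1) < B"
    and GV: "G \<subseteq> PiE {..<m} (\<lambda>_. {..<d})" and finG: "finite G" and cardG: "card G = k"
    and wG: "w \<in> G" and rel: "(\<Sum>v\<in>G. digits_value B m v) = k * digits_value B m w"
  shows "\<forall>i<m. (\<Sum>v\<in>G-{w}. v i) = (k-1) * w i"
proof -
  let ?N = "digits_value B m" and ?H = "G - {w}"
  have digit_le: "v i \<le> d - 1" if "v \<in> G" "i < m" for v i
    using that GV by (fastforce simp: PiE_def Pi_def)
  have "(\<Sum>v\<in>G. ?N v) = ?N w + (\<Sum>v\<in>?H. ?N v)"
    using sum.remove[OF finG wG] .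
  then have "(\<Sum>v\<in>?H. ?N v) = (k-1) * ?N w"
    using rel by (simp add: diff_mult_distrib)
  then have codes_eq: "?N (\<lambda>i. \<Sum>v\<in>?H. v i) = ?N (\<lambda>i. (k-1) * w i)"
    by (simp only: digits_value_sum digits_value_scale)
  have sum_digits_less: "\<forall>i<m. (\<Sum>v\<in>?H. v i) < B"
  proof (intro allI impI)
    fix i assume "i < m"
    then have "(\<Sum>v\<in>?H. v i) \<le> card ?H * (d-1)"
      using digit_le sum_bounded_above[of ?H "\<lambda>v. v i" "d-1"] by simp
    then show "(\<Sum>v\<in>?H. v i) < B" using cardG finG wG dB by simp
  qed
  have scaled_digits_less: "\<forall>i<m. (k-1) * w i < B"
  proof (intro allI impI)
    fix i assume "i < m"
    then have "(k-1) * w i \<le> (k-1)*(d-1)" using digit_le wG by (intro mult_le_mono2) auto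
    then show "(k-1) * w i < B" using dB by linarith
  qed
  show ?thesis
    using digits_value_inject[OF sum_digits_less scaled_digits_less codes_eq] .
qed

lemma sphere_codes_barycentric_free:
  fixes k B d m r n :: nat
  assumes k2: "k \<ge> 2" and kB: "k * B^m \<le> n" and dB: "(k-1)*(d-1) < B"
    and FV: "F \<subseteq> PiE {..<m} (\<lambda>_. {..<d})" and sphere: "\<forall>v\<in>F. (\<Sum>i<m. v i ^ 2) = r"
    and SF: "S \<subseteq> (\<lambda>v. int (digits_value B m v)) ` F"
  shows "\<not> barycentric (integer_mod_group n) k S"
proof
  assume "barycentric (integer_mod_group n) k S"
  have digit_less_B: "v i < B" if "v \<in> F" "i < m" for v i
    using grid_digit_less_base[OF _ that(2) k2 dB] that(1) FV by blast
  have small: "\<forall>v\<in>F. digits_value B m v < B^m"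
    using digit_less_B by (auto intro: digits_value_less)
  have "inj_on (digits_value B m) F"
  proof (rule inj_onI)
    fix u v assume uv: "u \<in> F" "v \<in> F" "digits_value B m u = digits_value B m v"
    have "\<forall>i<m. u i < B" "\<forall>i<m. v i < B" using uv(1,2) digit_less_B by auto
    then have "\<forall>i<m. u i = v i" by (rule digits_value_inject[OF _ _ uv(3)])
    then show "u = v" using uv(1,2) FV by (intro PiE_lessThan_eqI) auto
  qed
  then obtain G w where G: "G \<subseteq> F" "finite G" "card G = k" "w \<in> G"
      and rel: "(\<Sum>v\<in>G. digits_value B m v) = k * digits_value B m w"
    using barycentric_small_residues[OF _ small kB SF \<open>barycentric _ k S\<close>] by blast
  let ?H = "G - {w}"
  have avg: "\<forall>i<m. (\<Sum>v\<in>?H. v i) = (k-1) * w i"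
    using grid_relation_digitwise[OF k2 dB _ G(2,3,4) rel] G(1) FV by blast
  have int_norm: "(\<Sum>i<m. int (u i) ^ 2) = int r" if "u \<in> F" for u
  proof -
    have "int (\<Sum>i<m. u i ^ 2) = int r" using sphere that by simp
    then show ?thesis by simp
  qed
  have "\<forall>u\<in>?H. (\<Sum>i<m. int (u i) ^ 2) = (\<Sum>i<m. int (w i) ^ 2)"
  proof
    fix u assume "u \<in> ?H"
    then have "u \<in> F" "w \<in> F" using G(1,4) by auto
    then show "(\<Sum>i<m. int (u i) ^ 2) = (\<Sum>i<m. int (w i) ^ 2)" by (simp add: int_norm)
  qed
  moreover have "\<forall>i<m. (\<Sum>u\<in>?H. int (u i)) = of_nat (card ?H) * int (w i)"
    using avg G(2,3,4) by (simp flip: of_nat_sum of_nat_mult)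
  ultimately have "\<forall>u\<in>?H. \<forall>i<m. int (u i) = int (w i)"
    using average_on_sphere[where F="?H" and x="\<lambda>u i. int (u i)" and w="\<lambda>i. int (w i)"] G(2)
    by blast
  moreover obtain v where "v \<in> ?H"
  proof -
    have "card ?H = k - 1" using G(2,3,4) by simp
    then have "?H \<noteq> {}" using k2 by (intro notI) simp
    then show thesis using that by blast
  qed
  ultimately have "v = w" using G(1,4) FV by (intro PiE_lessThan_eqI) auto
  then show False using \<open>v \<in> ?H\<close> by simp
qed

lemma barycentric_free_set_exists:
  fixes n k B d m :: nat
  assumes k2: "k \<ge> 2" and kB: "k * B^m \<le> n" and dB: "(k-1)*(d-1) < B"
  shows "\<exists>A. A \<subseteq> carrier (integer_mod_group n) \<and>
           (\<forall>S\<subseteq>A. \<not> barycentric (integer_mod_group n) k S) \<and>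
           d^m \<le> card A * (m*(d-1)^2 + 1)"
proof -
  define V where "V = PiE {..<m} (\<lambda>_. {..<d})"
  define N where "N v = int (digits_value B m v)" for v
  have digit_le: "v i \<le> d - 1" if "v \<in> V" "i < m" for v i
    using that by (auto simp: V_def PiE_def Pi_def)
  have digit_less_B: "v i < B" if "v \<in> V" "i < m" for v i
    using grid_digit_less_base[OF _ that(2) k2 dB] that(1) by (simp add: V_def)
  have "B^m \<le> k * B^m" using k2 by simp
  have code_less_n: "digits_value B m v < n" if "v \<in> V" for v
  proof -
    have "digits_value B m v < B^m" using digit_less_B[OF that] by (intro digits_value_less) auto
    then show ?thesis using \<open>B^m \<le> k * B^m\<close> kB by linarith
  qed
  have "\<forall>v\<in>V. (\<Sum>i<m. v i ^ 2) \<le> m*(d-1)^2"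
    using sum_mono[of "{..<m}" "\<lambda>i. _ i ^ 2" "\<lambda>_. (d-1)^2"] digit_le
    by (simp add: power_mono)
  moreover have "finite V" by (simp add: V_def finite_PiE)
  ultimately obtain r where r: "card V \<le> card {v\<in>V. (\<Sum>i<m. v i ^ 2) = r} * (m*(d-1)^2 + 1)"
    using large_fibre[of V "\<lambda>v. \<Sum>i<m. v i ^ 2" "m*(d-1)^2"] by blast
  define F where "F = {v\<in>V. (\<Sum>i<m. v i ^ 2) = r}"
  have inj: "inj_on N F"
  proof (rule inj_onI)
    fix u v assume uv: "u \<in> F" "v \<in> F" "N u = N v"
    have "\<forall>i<m. u i < B" "\<forall>i<m. v i < B"
      using uv(1,2) digit_less_B by (auto simp: F_def)
    then have "\<forall>i<m. u i = v i" by (rule digits_value_inject) (use uv(3) in \<open>simp add: N_def\<close>)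
    then show "u = v" using uv(1,2) by (intro PiE_lessThan_eqI) (auto simp: F_def V_def)
  qed
  have "N ` F \<subseteq> carrier (integer_mod_group n)"
  proof
    fix x assume "x \<in> N ` F"
    then obtain v where v: "v \<in> V" "x = N v" by (auto simp: F_def)
    then have "x \<in> {0..<int n}" using code_less_n[OF v(1)] by (simp add: N_def)
    then show "x \<in> carrier (integer_mod_group n)" by (simp add: carrier_integer_mod_group)
  qed
  moreover have "\<forall>S\<subseteq>N ` F. \<not> barycentric (integer_mod_group n) k S"
    using sphere_codes_barycentric_free[OF k2 kB dB, of F r] unfolding N_def F_def V_def
    by blast
  moreover have "d^m \<le> card (N ` F) * (m*(d-1)^2 + 1)"
    using r card_image[OF inj] card_PiE[of "{..<m}" "\<lambda>_. {..<d}"] by (simp add: F_def V_def)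
  ultimately show ?thesis by blast
qed

section \<open>The lower bound\<close>

text \<open>Taking the smallest admissible base B = (k-1)(d-1)+1, the construction yields
  d^(m-2) < m BO(k, Z/nZ) as soon as k B^m \<le> n.\<close>
lemma BO_integer_mod_group_lower_bound:
  fixes n k d m :: nat
  assumes k2: "k \<ge> 2" and m2: "m \<ge> 2" and d1: "d \<ge> 1"
    and fits: "k * ((k-1)*(d-1) + 1)^m \<le> n"
  shows "d^(m-2) < m * BO k (integer_mod_group n)"
proof -
  obtain A where A: "A \<subseteq> carrier (integer_mod_group n)"
      "\<forall>S\<subseteq>A. \<not> barycentric (integer_mod_group n) k S"
      "d^m \<le> card A * (m*(d-1)^2 + 1)"
    using barycentric_free_set_exists[OF k2 fits less_add_one] by blast
  have "0 < k * ((k-1)*(d-1) + 1)^m" using k2 by simp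
  then have "n \<noteq> 0" using fits by linarith
  then have "finite (carrier (integer_mod_group n))" by (simp add: carrier_integer_mod_group)
  then have less_BO: "card A < BO k (integer_mod_group n)"
    using card_free_set_less_BO A(1,2) by blast
  have "m = (m-2) + 2" using m2 by simp
  then have split: "d^m = d^(m-2) * d^2" using power_add by metis
  have "(d-1)^2 + 1 \<le> d^2" using d1 by (cases d) (auto simp: power2_eq_square)
  have "m*(d-1)^2 + 1 \<le> m*((d-1)^2 + 1)" using m2 by (simp add: add_mult_distrib2)
  also have "\<dots> \<le> m * d^2" using \<open>(d-1)^2 + 1 \<le> d^2\<close> by (rule mult_le_mono2)
  finally have bound: "card A * (m*(d-1)^2 + 1) \<le> card A * (m * d^2)" by (rule mult_le_mono2)
  have "d^(m-2) * d^2 = d^m" using split by simp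
  also have "\<dots> \<le> card A * (m*(d-1)^2 + 1)" by (rule A(3))
  also have "\<dots> \<le> card A * (m * d^2)" by (rule bound)
  also have "\<dots> = (card A * m) * d^2" by (simp add: mult.assoc)
  finally have "d^(m-2) * d^2 \<le> (card A * m) * d^2" .
  then have "d^(m-2) \<le> card A * m" using d1 by simp
  also have "\<dots> < BO k (integer_mod_group n) * m" using less_BO m2 by simp
  finally show ?thesis by (simp add: mult.commute)
qed

text \<open>A real b \<ge> -1 bounded by c \<ge> 1 has b^j \<le> c^j (for odd j and negative b the
  left-hand side is negative); used to compare (x-k)/(k-1) with the grid size d.\<close>
lemma power_le_of_bounded_below:
  fixes b :: real
  assumes "-1 \<le> b" "b \<le> c" "1 \<le> c"
  shows "b^j \<le> c^j"
proof -
  have "\<bar>b\<bar> \<le> c" using assms by linarith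
  then have "\<bar>b\<bar>^j \<le> c^j" by (intro power_mono) auto
  moreover have "b^j \<le> \<bar>b\<bar>^j" by (metis abs_ge_self power_abs)
  ultimately show ?thesis by linarith
qed

text \<open>Choice of the grid size: with x = (n/k)^(1/m) let d - 1 = floor((x-1)/(k-1)).  Then the
  base (k-1)(d-1)+1 is at most x, so it fits (k x^m = n), and d is at least (x-k)/(k-1).\<close>
lemma grid_size_choice:
  fixes n k m :: nat
  assumes k2: "k \<ge> 2" and kn: "k \<le> n" and m1: "m \<ge> 1"
  defines "x \<equiv> (real n / real k) powr (1 / real m)"
  shows "\<exists>d\<ge>1. k * ((k-1)*(d-1) + 1)^m \<le> n \<and>
           -1 \<le> (x - real k) / (real k - 1) \<and> (x - real k) / (real k - 1) \<le> real d"
proof -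
  define d where "d = nat \<lfloor>(x - 1) / (real k - 1)\<rfloor> + 1"
  define B where "B = (k-1)*(d-1) + 1"
  have k1: "real k - 1 > 0" using k2 by simp
  have nk: "real n / real k \<ge> 1" using k2 kn by simp
  then have x1: "x \<ge> 1" unfolding x_def by (intro ge_one_powr_ge_zero) auto
  have "x ^ m = x powr real m" using x1 by (simp add: powr_realpow)
  also have "\<dots> = real n / real k" using m1 nk by (simp add: x_def powr_powr)
  finally have xm: "x ^ m = real n / real k" .
  have "real (d - 1) \<le> (x - 1) / (real k - 1)" using x1 k1 by (simp add: d_def)
  then have "real B \<le> x" using k1 k2 by (simp add: B_def field_simps of_nat_diff)
  then have "real B ^ m \<le> x ^ m" by (rule power_mono) simp
  then have "real (k * B^m) \<le> real n" using xm k2 by (simp add: field_simps)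
  then have fits: "k * B^m \<le> n" by (simp only: of_nat_le_iff)
  have "-1 \<le> (x - real k) / (real k - 1)" using x1 k1 by (simp add: field_simps)
  moreover have "(x - 1) / (real k - 1) < real d" unfolding d_def using x1 k1 by linarith
  then have "(x - real k) / (real k - 1) \<le> real d" using k1 by (simp add: field_simps)
  ultimately show ?thesis using fits unfolding B_def by (intro exI[of _ d]) (simp add: d_def)
qed

theorem mainTheorem10:
  fixes n k m :: nat
  assumes "n \<ge> 6" and "3 \<le> k" and "k + 3 \<le> n" and "m \<ge> 2"
  shows "real (BO k (integer_mod_group n)) \<ge>
     (1 / real m) * (((real n / real k) powr (1 / real m) - real k) / (real k - 1)) ^ (m - 2)"
proof -
  define b where "b = ((real n / real k) powr (1 / real m) - real k) / (real k - 1)"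
  obtain d where d1: "d \<ge> 1" and fits: "k * ((k-1)*(d-1) + 1)^m \<le> n"
      and b_range: "-1 \<le> b" "b \<le> real d"
    using grid_size_choice[of k n m] assms(2-4) unfolding b_def by auto
  have "d^(m-2) < m * BO k (integer_mod_group n)"
    using BO_integer_mod_group_lower_bound[OF _ assms(4) d1 fits] assms(2) by simp
  then have "real (d^(m-2)) < real (m * BO k (integer_mod_group n))"
    by (simp only: of_nat_less_iff)
  moreover have "b ^ (m-2) \<le> real d ^ (m-2)"
    using power_le_of_bounded_below[OF b_range] d1 by simp
  ultimately have "b ^ (m-2) \<le> real m * real (BO k (integer_mod_group n))" by simp
  moreover have "real m > 0" using assms(4) by simp
  ultimately have "(1 / real m) * b ^ (m-2) \<le> real (BO k (integer_mod_group n))"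
    by (simp add: field_simps)
  then show ?thesis by (simp only: b_def)
qed

end
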